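(* Let $m\ge 1$, $0\le\rho<\tfrac12$, and let $P_1\ge P_2\ge\dots\ge P_{2^m}$ be a probability distribution on $2^m$ words $\mathbf{w}_1,\dots,\mathbf{w}_{2^m}\in\{0,1\}^m$. Define $P_k^d=\sum_{j}\rho^{d(k,j)}(1-\rho)^{m-d(k,j)}P_j$, where $d(k,j)$ is the Hamming distance between $\mathbf{w}_k$ and $\mathbf{w}_j$, and assume $P_1^d\ge P_2^d\ge\dots\ge P_{2^m}^d$. Fix $1\le i<2^m$ and let $(N_i^e(t),N_i^d(t))_{t\ge t_0}$ be a Markov chain on $\mathbb{Z}^2$ with i.i.d. steps, where the probability $P^i_{\{x,y\}}$ of moving from $(N_i^e,N_i^d)$ to $(N_i^e+x,N_i^d+y)$, $x,y\in\{-1,0,1\}$, is: $P^i_{\{1,1\}}=(1-\rho)^{m}P_i$; $P^i_{\{-1,-1\}}=(1-\rho)^mP_{i+1}$; $P^i_{\{1,-1\}}=\rho^{d(i,i+1)}(1-\rho)^{m-d(i,i+1)}P_i$; $P^i_{\{-1,1\}}=\rho^{d(i+1,i)}(1-\rho)^{m-d(i+1,i)}P_{i+1}$; $P^i_{\{1,0\}}=\sum_{j\ne i,i+1}\rho^{d(i,j)}(1-\rho)^{m-d(i,j)}P_i$; $P^i_{\{-1,0\}}=\sum_{j\ne i,i+1}\rho^{d(i+1,j)}(1-\rho)^{m-d(i+1,j)}P_{i+1}$; $P^i_{\{0,1\}}=\sum_{j\ne i,i+1}\rho^{d(i,j)}(1-\rho)^{m-d(i,j)}P_j$; $P^i_{\{0,-1\}}=\sum_{j\ne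 i,i+1}\rho^{d(i+1,j)}(1-\rho)^{m-d(i+1,j)}P_j$; and $P^i_{\{0,0\}}=1-\sum_{(x,y)\ne(0,0)}P^i_{\{x,y\}}$. Suppose $N_i^e(t_0)>0$ and $N_i^d(t_0)>0$ (a stable pair). Let $Q_i(N_i^e(t_0),N_i^d(t_0))$ be the probability that there exists $t>t_0$ with $N_i^e(t)=0$ or $N_i^d(t)=0$. Then $$Q_i(N_i^e(t_0),N_i^d(t_0))\le\left(\frac{P_{i+1}}{P_i}\right)^{N_i^e(t_0)}+\left(\frac{P_{i+1}^d}{P_i^d}\right)^{N_i^d(t_0)}.$$
   Context: This models a rate-1 direct shaping code with parsing length $m$ on SLC flash modeled as a binary symmetric channel with crossover probability $\rho$: i.i.d. input words $\mathbf{w}_k$ with probabilities $P_k$; $N_i^e(t)=n_i^e(t)-n_{i+1}^e(t)$ is the difference between the encoder counts of the $i$th and $(i+1)$st words and $N_i^d(t)$ the analogous difference of decoder counts; when the dictionary is stable, $P_k^d$ is the probability that the decoder outputs $\mathbf{w}_k$. The pair's evolution is modeled by the random walk in the claim. *)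

theory Defs
  imports "HOL-Probability.Probability"
begin

definition hamming :: "bool list \<Rightarrow> bool list \<Rightarrow> nat" where
  "hamming u v = card {l. l < length u \<and> u ! l \<noteq> v ! l}"

definition bsc :: "real \<Rightarrow> nat \<Rightarrow> nat \<Rightarrow> real" where
  "bsc \<rho> m d = \<rho> ^ d * (1 - \<rho>) ^ (m - d)"

definition cw :: "real \<Rightarrow> nat \<Rightarrow> (nat \<Rightarrow> bool list) \<Rightarrow> nat \<Rightarrow> nat \<Rightarrow> real" where
  "cw \<rho> m w k j = bsc \<rho> m (hamming (w k) (w j))"

definition Pdec :: "real \<Rightarrow> nat \<Rightarrow> (nat \<Rightarrow> bool list) \<Rightarrow> (nat \<Rightarrow> real) \<Rightarrow> nat \<Rightarrow> real" where
  "Pdec \<rho> m w P k = (\<Sum>j\<in>{1..2^m}. cw \<rho> m w k j * P j)"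

definition step_prob :: "real \<Rightarrow> nat \<Rightarrow> (nat \<Rightarrow> bool list) \<Rightarrow> (nat \<Rightarrow> real) \<Rightarrow> nat
    \<Rightarrow> int \<Rightarrow> int \<Rightarrow> real" where
  "step_prob \<rho> m w P i x y =
    (let R = {1..2^m} - {i, i+1};
         p11 = (1 - \<rho>) ^ m * P i;
         pmm = (1 - \<rho>) ^ m * P (i+1);
         p1m = cw \<rho> m w i (i+1) * P i;
         pm1 = cw \<rho> m w (i+1) i * P (i+1);
         p10 = (\<Sum>j\<in>R. cw \<rho> m w i j * P i);
         pm0 = (\<Sum>j\<in>R. cw \<rho> m w (i+1) j * P (i+1));
         p01 = (\<Sum>j\<in>R. cw \<rho> m w i j * P j);
         p0m = (\<Sum>j\<in>R. cw \<rho> m w (i+1) j * P j)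
     in if (x, y) = (1, 1) then p11
        else if (x, y) = (-1, -1) then pmm
        else if (x, y) = (1, -1) then p1m
        else if (x, y) = (-1, 1) then pm1
        else if (x, y) = (1, 0) then p10
        else if (x, y) = (-1, 0) then pm0
        else if (x, y) = (0, 1) then p01
        else if (x, y) = (0, -1) then p0m
        else if (x, y) = (0, 0) then 1 - (p11 + pmm + p1m + pm1 + p10 + pm0 + p01 + p0m)
        else 0)"

definition walk :: "nat \<Rightarrow> nat \<Rightarrow> (int \<times> int) stream \<Rightarrow> nat \<Rightarrow> int \<times> int" where
  "walk a b \<omega> n = (int a + (\<Sum>k<n. fst (\<omega> !! k)), int b + (\<Sum>k<n. snd (\<omega> !! k)))"

definition hit_prob :: "(int \<times> int) pmf \<Rightarrow> nat \<Rightarrow> nat \<Rightarrow> real" where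
  "hit_prob S a b = measure (stream_space (measure_pmf S))
     {\<omega> \<in> space (stream_space (measure_pmf S)).
        \<exists>n>0. fst (walk a b \<omega> n) = 0 \<or> snd (walk a b \<omega> n) = 0}"

end

theory Submission
  imports Defs
begin

text \<open>Each coordinate of the walk is on its own a lazy simple random walk on the integers.
  Its up- and down-step probabilities are the marginals of the step law, which are P i and
  P (i+1) for the encoder coordinate and Pdec i and Pdec (i+1) for the decoder coordinate,
  because the channel probabilities \<rho>^d (1-\<rho>)^(m-d) out of a fixed word sum to 1.
  For a lazy walk with up-probability p at least its down-probability q, the function r^a
  with r = q/p is harmonic at every a > 0, so induction on the time horizon bounds the
  probability of reaching 0 from a by r^a (gambler's ruin). A union bound over the two
  coordinates gives the claim.\<close>

lemma set_pmf_subset_if_sum_pmf_eq_1: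
  assumes "finite A" and "(\<Sum>x\<in>A. pmf M x) = 1"
  shows "set_pmf M \<subseteq> A"
proof -
  have "measure_pmf.prob M A = 1"
    using assms by (simp add: measure_measure_pmf_finite)
  then have "AE x in M. x \<in> A"
    by (simp add: measure_pmf.prob_eq_1)
  then show ?thesis
    by (auto simp: AE_measure_pmf_iff)
qed

lemma pmf_map_pmf_eq_sum_fiber:
  assumes "finite A" and "set_pmf M \<subseteq> A"
  shows "pmf (map_pmf f M) y = (\<Sum>x\<in>{x\<in>A. f x = y}. pmf M x)"
proof -
  have "pmf (map_pmf f M) y = measure_pmf.prob M (f -` {y} \<inter> set_pmf M)"
    by (simp add: pmf_map measure_Int_set_pmf)
  also have "f -` {y} \<inter> set_pmf M = {x\<in>A. f x = y} \<inter> set_pmf M"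
    using assms(2) by auto
  also have "measure_pmf.prob M \<dots> = (\<Sum>x\<in>{x\<in>A. f x = y}. pmf M x)"
    using assms(1) by (simp add: measure_Int_set_pmf measure_measure_pmf_finite)
  finally show ?thesis .
qed

lemma nn_integral_lazy_step:
  fixes D :: "int pmf" and f :: "int \<Rightarrow> real"
  assumes "set_pmf D \<subseteq> {-1, 0, 1}" and "\<And>k. f k \<ge> 0"
  shows "(\<integral>\<^sup>+k. ennreal (f k) \<partial>D)
    = ennreal (pmf D 1 * f 1 + pmf D (-1) * f (-1) + (1 - pmf D 1 - pmf D (-1)) * f 0)"
proof -
  have "pmf D 0 = 1 - pmf D 1 - pmf D (-1)"
    using sum_pmf_eq_1[OF _ assms(1)] by simp
  then have sum_eq: "(\<Sum>k\<in>{-1, 0, 1}. f k * pmf D k)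
      = pmf D 1 * f 1 + pmf D (-1) * f (-1) + (1 - pmf D 1 - pmf D (-1)) * f 0"
    by simp
  have "(\<integral>\<^sup>+k. ennreal (f k) \<partial>D) = (\<Sum>k\<in>{-1, 0, 1}. ennreal (f k) * pmf D k)"
    using assms(1) by (intro nn_integral_measure_pmf_support) auto
  also have "\<dots> = ennreal (\<Sum>k\<in>{-1, 0, 1}. f k * pmf D k)"
    using assms(2) by (simp add: ennreal_mult)
  finally show ?thesis
    unfolding sum_eq .
qed

lemma hamming_le_length: "hamming u v \<le> length u"
  unfolding hamming_def by (rule order_trans[OF card_mono[of "{..<length u}"]]) auto

lemma hamming_commute: "length u = length v \<Longrightarrow> hamming u v = hamming v u"
  unfolding hamming_def by metis

lemma hamming_Cons: "hamming (b # u) (c # v) = of_bool (b \<noteq> c) + hamming u v"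
proof -
  have sum_form: "hamming u v = (\<Sum>l<length u. of_bool (u ! l \<noteq> v ! l))" for u v :: "bool list"
    unfolding hamming_def by (simp add: sum_of_bool_eq Int_def conj_commute)
  show ?thesis
    unfolding sum_form length_Cons sum.lessThan_Suc_shift by simp
qed

lemma bsc_Cons:
  "bsc \<rho> (Suc (length u)) (hamming (b # u) (c # v))
    = (if b = c then 1 - \<rho> else \<rho>) * bsc \<rho> (length u) (hamming u v)"
  using hamming_le_length[of u v] by (simp add: bsc_def hamming_Cons Suc_diff_le)

lemma sum_bsc_hamming_eq_1:
  "(\<Sum>v | length v = length u. bsc \<rho> (length u) (hamming u v)) = 1"
proof (induction u)
  case Nil
  show ?case
    by (simp add: bsc_def hamming_def)
next
  case (Cons b u)
  let ?L = "{v :: bool list. length v = length u}"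
  have words_Suc: "{v. length v = Suc (length u)} = (\<lambda>(c, v). c # v) ` (UNIV \<times> ?L)"
    by (auto simp: length_Suc_conv image_def)
  have "(\<Sum>v | length v = length (b # u). bsc \<rho> (length (b # u)) (hamming (b # u) v))
      = (\<Sum>c\<in>UNIV. \<Sum>v\<in>?L. bsc \<rho> (Suc (length u)) (hamming (b # u) (c # v)))"
    unfolding length_Cons words_Suc
    by (subst sum.reindex) (auto simp: inj_on_def case_prod_beta sum.cartesian_product)
  also have "\<dots> = (\<Sum>c\<in>UNIV. (if b = c then 1 - \<rho> else \<rho>) * (\<Sum>v\<in>?L. bsc \<rho> (length u) (hamming u v)))"
    by (simp add: bsc_Cons sum_distrib_left)
  also have "\<dots> = 1"
    using Cons.IH by (simp add: UNIV_bool)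
  finally show ?case .
qed

lemma sum_cw_eq_1:
  assumes words: "bij_betw w I {xs. length xs = m}" and "k \<in> I"
  shows "(\<Sum>j\<in>I. cw \<rho> m w k j) = 1"
proof -
  have len: "length (w k) = m"
    using bij_betw_apply[OF words \<open>k \<in> I\<close>] by simp
  have "(\<Sum>j\<in>I. cw \<rho> m w k j) = (\<Sum>v | length v = m. bsc \<rho> m (hamming (w k) v))"
    unfolding cw_def by (rule sum.reindex_bij_betw[OF words])
  also have "\<dots> = 1"
    using sum_bsc_hamming_eq_1[where u = "w k"] len by simp
  finally show ?thesis .
qed

lemma step_prob_table:
  fixes m i :: nat
  defines "R \<equiv> {1..2^m} - {i, i + 1}"
  shows "step_prob \<rho> m w P i 1 1 = (1 - \<rho>) ^ m * P i"
    and "step_prob \<rho> m w P i (-1) (-1) = (1 - \<rho>) ^ m * P (i + 1)"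
    and "step_prob \<rho> m w P i 1 (-1) = cw \<rho> m w i (i + 1) * P i"
    and "step_prob \<rho> m w P i (-1) 1 = cw \<rho> m w (i + 1) i * P (i + 1)"
    and "step_prob \<rho> m w P i 1 0 = (\<Sum>j\<in>R. cw \<rho> m w i j * P i)"
    and "step_prob \<rho> m w P i (-1) 0 = (\<Sum>j\<in>R. cw \<rho> m w (i + 1) j * P (i + 1))"
    and "step_prob \<rho> m w P i 0 1 = (\<Sum>j\<in>R. cw \<rho> m w i j * P j)"
    and "step_prob \<rho> m w P i 0 (-1) = (\<Sum>j\<in>R. cw \<rho> m w (i + 1) j * P j)"
    and "(\<Sum>x\<in>{-1, 0, 1}. \<Sum>y\<in>{-1, 0, 1}. step_prob \<rho> m w P i x y) = 1"
  unfolding R_def by (simp_all add: step_prob_def Let_def)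

lemma step_prob_marginal_sums:
  assumes words: "bij_betw w {1..2^m} {xs. length xs = m}" and i: "1 \<le> i" "i < 2^m"
  shows "step_prob \<rho> m w P i 1 (-1) + step_prob \<rho> m w P i 1 0 + step_prob \<rho> m w P i 1 1 = P i"
    and "step_prob \<rho> m w P i (-1) (-1) + step_prob \<rho> m w P i (-1) 0 + step_prob \<rho> m w P i (-1) 1
      = P (i + 1)"
    and "step_prob \<rho> m w P i (-1) 1 + step_prob \<rho> m w P i 0 1 + step_prob \<rho> m w P i 1 1
      = Pdec \<rho> m w P i"
    and "step_prob \<rho> m w P i (-1) (-1) + step_prob \<rho> m w P i 0 (-1) + step_prob \<rho> m w P i 1 (-1)
      = Pdec \<rho> m w P (i + 1)"
proof -
  let ?R = "{1..2^m} - {i, i + 1}"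
  have i_in: "i \<in> {1..2^m}" "i + 1 \<in> {1..2^m}"
    using i by auto
  have split: "(\<Sum>j\<in>{1..2^m}. f j) = f i + f (i + 1) + (\<Sum>j\<in>?R. f j)" for f :: "nat \<Rightarrow> real"
    using sum.subset_diff[of "{i, i + 1}" "{1..2^m}" f] i_in by simp
  have diag: "cw \<rho> m w k k = (1 - \<rho>) ^ m" for k
    by (simp add: cw_def bsc_def hamming_def)
  have "length (w i) = m" "length (w (i + 1)) = m"
    using bij_betw_apply[OF words] i_in by auto
  then have sym: "cw \<rho> m w (i + 1) i = cw \<rho> m w i (i + 1)"
    unfolding cw_def using hamming_commute[of "w (i + 1)" "w i"] by simp
  have rows: "P i * (\<Sum>j\<in>{1..2^m}. cw \<rho> m w i j) = P i"
    "P (i + 1) * (\<Sum>j\<in>{1..2^m}. cw \<rho> m w (i + 1) j) = P (i + 1)"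
    using sum_cw_eq_1[OF words] i_in by auto
  show "step_prob \<rho> m w P i 1 (-1) + step_prob \<rho> m w P i 1 0 + step_prob \<rho> m w P i 1 1 = P i"
    using rows(1) unfolding split step_prob_table diag sum_distrib_right[symmetric]
    by (simp add: distrib_left mult.commute)
  show "step_prob \<rho> m w P i (-1) (-1) + step_prob \<rho> m w P i (-1) 0 + step_prob \<rho> m w P i (-1) 1
      = P (i + 1)"
    using rows(2) unfolding split step_prob_table diag sum_distrib_right[symmetric]
    by (simp add: distrib_left mult.commute)
  show "step_prob \<rho> m w P i (-1) 1 + step_prob \<rho> m w P i 0 1 + step_prob \<rho> m w P i 1 1
      = Pdec \<rho> m w P i"
    unfolding Pdec_def split step_prob_table diag sym by simp
  show "step_prob \<rho> m w P i (-1) (-1) + step_prob \<rho> m w P i 0 (-1) + step_prob \<rho> m w P i 1 (-1)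
      = Pdec \<rho> m w P (i + 1)"
    unfolding Pdec_def split step_prob_table diag sym by simp
qed

lemma step_law_marginals:
  assumes words: "bij_betw w {1..2^m} {xs. length xs = m}" and i: "1 \<le> i" "i < 2^m"
    and S: "\<forall>x\<in>{-1,0,1}. \<forall>y\<in>{-1,0,1}. pmf S (x, y) = step_prob \<rho> m w P i x y"
  shows "set_pmf S \<subseteq> {-1, 0, 1} \<times> {-1, 0, 1}"
    and "pmf (map_pmf fst S) 1 = P i" "pmf (map_pmf fst S) (-1) = P (i + 1)"
    and "pmf (map_pmf snd S) 1 = Pdec \<rho> m w P i" "pmf (map_pmf snd S) (-1) = Pdec \<rho> m w P (i + 1)"
proof -
  let ?A = "{-1, 0, 1} \<times> {-1, 0, 1} :: (int \<times> int) set"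
  have finite: "finite ?A"
    by simp
  show support: "set_pmf S \<subseteq> ?A"
  proof (rule set_pmf_subset_if_sum_pmf_eq_1[OF finite])
    show "(\<Sum>z\<in>?A. pmf S z) = 1"
      using step_prob_table(9)[of \<rho> m w P i] S by (simp add: sum.cartesian_product)
  qed
  have fibers: "{z\<in>?A. fst z = 1} = {(1, -1), (1, 0), (1, 1)}" "{z\<in>?A. fst z = -1} = {(-1, -1), (-1, 0), (-1, 1)}"
    "{z\<in>?A. snd z = 1} = {(-1, 1), (0, 1), (1, 1)}" "{z\<in>?A. snd z = -1} = {(-1, -1), (0, -1), (1, -1)}"
    by auto
  show "pmf (map_pmf fst S) 1 = P i" "pmf (map_pmf fst S) (-1) = P (i + 1)"
    "pmf (map_pmf snd S) 1 = Pdec \<rho> m w P i" "pmf (map_pmf snd S) (-1) = Pdec \<rho> m w P (i + 1)"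
    unfolding pmf_map_pmf_eq_sum_fiber[OF finite support] fibers
    using step_prob_marginal_sums[OF words i] S by (simp_all add: algebra_simps)
qed

text \<open>Allowing k = 0 and relaxing "= 0" to "\<le> 0" only enlarges the hitting event of the
  paper, which is all an upper bound needs.\<close>
definition hits_nonpos_within :: "('a \<Rightarrow> int) \<Rightarrow> int \<Rightarrow> nat \<Rightarrow> 'a stream set" where
  "hits_nonpos_within g a n = {\<omega>. \<exists>k\<le>n. a + (\<Sum>j<k. g (\<omega> !! j)) \<le> 0}"

lemma hits_nonpos_within_in_sets:
  "hits_nonpos_within g a n \<in> sets (stream_space (measure_pmf S))"
proof -
  let ?M = "stream_space (measure_pmf S)"
  have "(\<lambda>\<omega>. real_of_int a + (\<Sum>j<k. real_of_int (g (\<omega> !! j)))) \<in> borel_measurable ?M" for k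
    by (intro borel_measurable_add borel_measurable_const borel_measurable_sum
        measurable_compose[OF measurable_snth]) simp
  then have "{\<omega>\<in>space ?M. real_of_int a + (\<Sum>j<k. real_of_int (g (\<omega> !! j))) \<le> 0} \<in> sets ?M" for k
    by measurable
  then have "(\<Union>k\<in>{..n}. {\<omega>\<in>space ?M. real_of_int a + (\<Sum>j<k. real_of_int (g (\<omega> !! j))) \<le> 0}) \<in> sets ?M"
    by blast
  also have "(\<Union>k\<in>{..n}. {\<omega>\<in>space ?M. real_of_int a + (\<Sum>j<k. real_of_int (g (\<omega> !! j))) \<le> 0})
      = hits_nonpos_within g a n"
    unfolding hits_nonpos_within_def space_stream_space by (auto simp flip: of_int_sum)
  finally show ?thesis .
qed

lemma incseq_hits_nonpos_within: "incseq (hits_nonpos_within g a)"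
  unfolding incseq_def hits_nonpos_within_def by (auto intro: le_trans)

lemma Cons_in_hits_nonpos_within_Suc:
  assumes "a > 0"
  shows "x ## \<omega> \<in> hits_nonpos_within g a (Suc n) \<longleftrightarrow> \<omega> \<in> hits_nonpos_within g (a + g x) n"
proof -
  have shift: "a + (\<Sum>j<Suc k. g ((x ## \<omega>) !! j)) = a + g x + (\<Sum>j<k. g (\<omega> !! j))" for k
    by (subst sum.lessThan_Suc_shift) simp
  have "x ## \<omega> \<in> hits_nonpos_within g a (Suc n)
      \<longleftrightarrow> (\<exists>k<Suc (Suc n). a + (\<Sum>j<k. g ((x ## \<omega>) !! j)) \<le> 0)"
    unfolding hits_nonpos_within_def less_Suc_eq_le by simp
  also have "\<dots> \<longleftrightarrow> (\<exists>k<Suc n. a + (\<Sum>j<Suc k. g ((x ## \<omega>) !! j)) \<le> 0)"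
    unfolding Ex_less_Suc2 using assms by simp
  also have "\<dots> \<longleftrightarrow> \<omega> \<in> hits_nonpos_within g (a + g x) n"
    unfolding hits_nonpos_within_def less_Suc_eq_le shift by simp
  finally show ?thesis .
qed

lemma ruin_weight_harmonic:
  fixes p q r :: real and a :: int
  assumes "a > 0" and "p * r = q"
  shows "p * r ^ nat (a + 1) + q * r ^ nat (a - 1) + (1 - p - q) * r ^ nat a = r ^ nat a"
proof -
  obtain b where b: "nat a = Suc b"
    using assms(1) by (cases "nat a") auto
  then have "nat (a + 1) = Suc (Suc b)" "nat (a - 1) = b"
    by auto
  with b assms(2)[symmetric] show ?thesis
    by (simp add: algebra_simps)
qed

lemma emeasure_hits_nonpos_within_le:
  fixes S :: "'a pmf" and g :: "'a \<Rightarrow> int"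
  defines "p \<equiv> pmf (map_pmf g S) 1" and "q \<equiv> pmf (map_pmf g S) (-1)"
  assumes steps: "g ` set_pmf S \<subseteq> {-1, 0, 1}" and drift: "q \<le> p"
  shows "emeasure (stream_space S) (hits_nonpos_within g a n) \<le> ennreal ((q / p) ^ nat a)"
proof -
  interpret prob_space "stream_space S"
    by (rule prob_space.prob_space_stream_space[OF prob_space_measure_pmf])
  define r where "r = q / p"
  have "0 \<le> q"
    unfolding q_def by simp
  then have pr: "p * r = q" and r_nonneg: "0 \<le> r"
    using drift by (auto simp: r_def)
  have harmonic: "(\<integral>\<^sup>+t. ennreal (r ^ nat (a + g t)) \<partial>S) = ennreal (r ^ nat a)" if "a > 0" for a
    using nn_integral_lazy_step[of "map_pmf g S" "\<lambda>k. r ^ nat (a + k)"] steps r_nonneg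
      ruin_weight_harmonic[OF that pr]
    by (simp add: p_def q_def)
  show ?thesis
    unfolding r_def[symmetric]
  proof (induction n arbitrary: a)
    case 0
    show ?case
      by (cases "a > 0") (auto simp: hits_nonpos_within_def emeasure_le_1)
  next
    case (Suc n)
    show ?case
    proof (cases "a > 0")
      case True
      have "emeasure (stream_space S) (hits_nonpos_within g a (Suc n))
          = (\<integral>\<^sup>+t. emeasure (stream_space S)
              {\<omega>\<in>space (stream_space S). t ## \<omega> \<in> hits_nonpos_within g a (Suc n)} \<partial>S)"
        by (rule prob_space.emeasure_stream_space[OF prob_space_measure_pmf hits_nonpos_within_in_sets])
      also have "\<dots> = (\<integral>\<^sup>+t. emeasure (stream_space S) (hits_nonpos_within g (a + g t) n) \<partial>S)"
        using True by (simp add: Cons_in_hits_nonpos_within_Suc space_stream_space)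
      also have "\<dots> \<le> (\<integral>\<^sup>+t. ennreal (r ^ nat (a + g t)) \<partial>S)"
        by (intro nn_integral_mono Suc.IH)
      also have "\<dots> = ennreal (r ^ nat a)"
        using harmonic[OF True] .
      finally show ?thesis .
    qed (simp add: emeasure_le_1)
  qed
qed

lemma measure_UN_hits_nonpos_within_le:
  fixes S :: "'a pmf" and g :: "'a \<Rightarrow> int"
  defines "p \<equiv> pmf (map_pmf g S) 1" and "q \<equiv> pmf (map_pmf g S) (-1)"
  assumes steps: "g ` set_pmf S \<subseteq> {-1, 0, 1}" and drift: "q \<le> p"
  shows "measure (stream_space S) (\<Union>n. hits_nonpos_within g a n) \<le> (q / p) ^ nat a"
proof -
  interpret prob_space "stream_space S"
    by (rule prob_space.prob_space_stream_space[OF prob_space_measure_pmf])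
  have "emeasure (stream_space S) (\<Union>n. hits_nonpos_within g a n)
      = (SUP n. emeasure (stream_space S) (hits_nonpos_within g a n))"
    using hits_nonpos_within_in_sets incseq_hits_nonpos_within
    by (intro SUP_emeasure_incseq[symmetric]) auto
  also have "\<dots> \<le> ennreal ((q / p) ^ nat a)"
    using emeasure_hits_nonpos_within_le[OF steps drift[unfolded p_def q_def]]
    by (simp add: p_def q_def SUP_least)
  finally have "emeasure (stream_space S) (\<Union>n. hits_nonpos_within g a n) \<le> ennreal ((q / p) ^ nat a)" .
  moreover have "0 \<le> (q / p) ^ nat a"
    by (simp add: p_def q_def)
  ultimately show ?thesis
    by (simp add: emeasure_eq_measure)
qed

lemma hit_prob_le_sum_coordinate_hits:
  "hit_prob S a b
    \<le> measure (stream_space S) (\<Union>n. hits_nonpos_within fst (int a) n)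
      + measure (stream_space S) (\<Union>n. hits_nonpos_within snd (int b) n)"
proof -
  interpret prob_space "stream_space S"
    by (rule prob_space.prob_space_stream_space[OF prob_space_measure_pmf])
  have sets: "(\<Union>n. hits_nonpos_within h c n) \<in> events" for h :: "int \<times> int \<Rightarrow> int" and c
    using hits_nonpos_within_in_sets by blast
  have "{\<omega> \<in> space (stream_space S). \<exists>n>0. fst (walk a b \<omega> n) = 0 \<or> snd (walk a b \<omega> n) = 0}
      \<subseteq> (\<Union>n. hits_nonpos_within fst (int a) n) \<union> (\<Union>n. hits_nonpos_within snd (int b) n)"
  proof
    fix \<omega>
    assume "\<omega> \<in> {\<omega> \<in> space (stream_space S). \<exists>n>0. fst (walk a b \<omega> n) = 0 \<or> snd (walk a b \<omega> n) = 0}"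
    then obtain n where "fst (walk a b \<omega> n) = 0 \<or> snd (walk a b \<omega> n) = 0"
      by blast
    then have "\<omega> \<in> hits_nonpos_within fst (int a) n \<or> \<omega> \<in> hits_nonpos_within snd (int b) n"
      unfolding walk_def hits_nonpos_within_def by auto
    then show "\<omega> \<in> (\<Union>n. hits_nonpos_within fst (int a) n) \<union> (\<Union>n. hits_nonpos_within snd (int b) n)"
      by blast
  qed
  then have "hit_prob S a b
      \<le> measure (stream_space S) ((\<Union>n. hits_nonpos_within fst (int a) n) \<union> (\<Union>n. hits_nonpos_within snd (int b) n))"
    unfolding hit_prob_def using sets by (intro finite_measure_mono) auto
  also have "\<dots> \<le> measure (stream_space S) (\<Union>n. hits_nonpos_within fst (int a) n)
      + measure (stream_space S) (\<Union>n. hits_nonpos_within snd (int b) n)"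
    using sets by (intro measure_subadditive) (simp_all add: emeasure_eq_measure)
  finally show ?thesis .
qed

theorem lemma1:
  fixes m :: nat and \<rho> :: real and P :: "nat \<Rightarrow> real" and w :: "nat \<Rightarrow> bool list"
    and i :: nat and S :: "(int \<times> int) pmf" and Ne Nd :: nat
  assumes m: "m \<ge> 1"
    and rho: "0 \<le> \<rho>" "\<rho> < 1/2"
    and words: "bij_betw w {1..2^m} {xs. length xs = m}"
    and P_nonneg: "\<forall>k\<in>{1..2^m}. P k \<ge> 0"
    and P_sum: "(\<Sum>k\<in>{1..2^m}. P k) = 1"
    and P_dec: "\<forall>k. 1 \<le> k \<and> k < 2^m \<longrightarrow> P (k+1) \<le> P k"
    and Pd_dec: "\<forall>k. 1 \<le> k \<and> k < 2^m \<longrightarrow> Pdec \<rho> m w P (k+1) \<le> Pdec \<rho> m w P k"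
    and i: "1 \<le> i" "i < 2^m"
    and S: "\<forall>x\<in>{-1,0,1}. \<forall>y\<in>{-1,0,1}. pmf S (x, y) = step_prob \<rho> m w P i x y"
    and start: "Ne > 0" "Nd > 0"
  shows "hit_prob S Ne Nd \<le> (P (i+1) / P i) ^ Ne + (Pdec \<rho> m w P (i+1) / Pdec \<rho> m w P i) ^ Nd"
proof -
  note marginals = step_law_marginals[OF words i S]
  have steps: "fst ` set_pmf S \<subseteq> {-1, 0, 1}" "snd ` set_pmf S \<subseteq> {-1, 0, 1}"
    using marginals(1) by auto
  have "measure (stream_space S) (\<Union>n. hits_nonpos_within fst (int Ne) n) \<le> (P (i + 1) / P i) ^ Ne"
    using measure_UN_hits_nonpos_within_le[OF steps(1), where a = "int Ne"] P_dec i by (simp add: marginals(2-5))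
  moreover have "measure (stream_space S) (\<Union>n. hits_nonpos_within snd (int Nd) n)
      \<le> (Pdec \<rho> m w P (i + 1) / Pdec \<rho> m w P i) ^ Nd"
    using measure_UN_hits_nonpos_within_le[OF steps(2), where a = "int Nd"] Pd_dec i by (simp add: marginals(2-5))
  ultimately show ?thesis
    using hit_prob_le_sum_coordinate_hits[of S Ne Nd] by linarith
qed

end
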